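(* For a plane binary tree $t$ with $k$ nodes, let $S_t(z)$ be the exponential generating function of plane increasing binary trees having no fringe subtree of shape $t$, and let $\tilde\rho$ be its dominant singularity. Then for every $\delta>0$ the following holds: if $k$ is sufficiently large, then $S_t(z)$ has no singularity in the domain \[ \tilde\rho < |z| < 1 + \frac{(2-\delta)\ln k}{k}. \]
   Context: A plane binary tree is a rooted tree in which each node has a left and a right slot, each empty or holding a subtree. A plane increasing binary tree of size $n$ is such a tree whose $n$ nodes are labeled $1,\dots,n$ increasingly along every path from the root. A fringe subtree is a node with all its descendants; its shape is obtained by forgetting labels. For $t$ with $k$ nodes, $w(t)=\ell(t)/k!$ where $\ell(t)$ is the number of increasing labelings of $t$. $S_t$ is the power series solution of $S_t'=(1+S_t)^2-w(t)kz^{k-1}$, $S_t(0)=0$; one has $S_t=-u'/u$ with $u$ the entire solution of $u''-2u'+(1-w(t)kz^{k-1})u=0$, $u(0)=-1$, $u'(0)=0$, and $\tilde\rho>1$ is the smallest positive zero of $u$. *)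

theory Defs
  imports "HOL-Complex_Analysis.Complex_Analysis"
begin

datatype ptree = Leaf | Node ptree ptree

fun nodes :: "ptree \<Rightarrow> nat" where
  "nodes Leaf = 0"
| "nodes (Node l r) = nodes l + nodes r + 1"

fun positions :: "ptree \<Rightarrow> bool list set" where
  "positions Leaf = {}"
| "positions (Node l r) =
     insert [] ((\<lambda>p. False # p) ` positions l \<union> (\<lambda>p. True # p) ` positions r)"

definition incr_labelings :: "ptree \<Rightarrow> (bool list \<Rightarrow> nat) set" where
  "incr_labelings t = {f. bij_betw f (positions t) {1..nodes t}
      \<and> (\<forall>p. p \<notin> positions t \<longrightarrow> f p = 0)
      \<and> (\<forall>p b. p @ [b] \<in> positions t \<longrightarrow> f p < f (p @ [b]))}"

definition ell :: "ptree \<Rightarrow> nat" where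
  "ell t = card (incr_labelings t)"

definition wt :: "ptree \<Rightarrow> real" where
  "wt t = real (ell t) / fact (nodes t)"

definition u_sol :: "ptree \<Rightarrow> complex \<Rightarrow> complex" where
  "u_sol t = (THE u. u holomorphic_on UNIV \<and> u 0 = -1 \<and> deriv u 0 = 0 \<and>
      (\<forall>z. deriv (deriv u) z - 2 * deriv u z
            + (1 - of_real (wt t) * of_nat (nodes t) * z ^ (nodes t - 1)) * u z = 0))"

text \<open>S_t = -u'/u (meromorphic continuation of the EGF of increasing trees
  avoiding fringe subtree shape t).\<close>
definition S_fun :: "ptree \<Rightarrow> complex \<Rightarrow> complex" where
  "S_fun t z = - deriv (u_sol t) z / u_sol t z"

definition rho_tilde :: "ptree \<Rightarrow> real" where
  "rho_tilde t = Inf {x::real. 0 < x \<and> u_sol t (of_real x) = 0}"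

end

theory Submission
  imports Defs "HOL-Real_Asymp.Real_Asymp" "HOL-Combinatorics.Multiset_Permutations"
begin

text \<open>Writing u = exp z * v turns the equation for u into v'' = a z^(k-1) v with a = w(t) k,
  v(0) = -1, v'(0) = 1. The labels 1 and 2 of an increasing labeling sit at the root and at one
  of its children, so ell(t) \<le> 2 (k-2)! and a \<le> 2/(k-1). For R = 1 + (2-\<delta>) ln k / k one has
  R^k \<le> k^(2-\<delta>), and the lacunary recursion for the Taylor coefficients of v bounds
  |v(z) - (z-1)| on the disc |z| \<le> R by some \<epsilon> = O(k^(-1-\<delta>)), which is small compared
  to R - 1. By Cauchy's estimate, v(z) - (z-1) is then a contraction near 1, so v has exactly one
  zero in the disc. By the intermediate value theorem this zero is real, hence it is rho_tilde t,
  and u, the denominator of S_t = -u'/u, has no zero with rho_tilde t < |z| \<le> R.\<close>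

section \<open>Second-order linear differential equations with entire coefficients\<close>

lemma fps_ode2_unique:
  fixes F G P Q :: "'a::field_char_0 fps"
  assumes F: "fps_deriv (fps_deriv F) + P * fps_deriv F + Q * F = 0"
    and G: "fps_deriv (fps_deriv G) + P * fps_deriv G + Q * G = 0"
    and "fps_nth F 0 = fps_nth G 0" "fps_nth F 1 = fps_nth G 1"
  shows "F = G"
proof (rule fps_ext)
  fix n show "fps_nth F n = fps_nth G n"
  proof (induction n rule: less_induct)
    case (less n)
    show ?case
    proof (cases "n \<ge> 2")
      case False
      then consider "n = 0" | "n = 1" by linarith
      then show ?thesis by cases (use assms in simp_all)
    next
      case True
      then obtain m where n: "n = Suc (Suc m)" by (metis add_2_eq_Suc le_Suc_ex)
      have lower: "fps_nth (P * fps_deriv F) m = fps_nth (P * fps_deriv G) m"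
        "fps_nth (Q * F) m = fps_nth (Q * G) m"
        using less.IH unfolding n by (auto simp: fps_mult_nth intro!: sum.cong)
      have leading: "fps_nth (fps_deriv (fps_deriv H)) m
          = of_nat (Suc m) * of_nat (Suc (Suc m)) * fps_nth H n" for H :: "'a fps"
        unfolding n by (simp add: algebra_simps)
      have "fps_nth (fps_deriv (fps_deriv F)) m + fps_nth (P * fps_deriv F) m + fps_nth (Q * F) m = 0"
           "fps_nth (fps_deriv (fps_deriv G)) m + fps_nth (P * fps_deriv G) m + fps_nth (Q * G) m = 0"
        using arg_cong[OF F, of "\<lambda>H. fps_nth H m"] arg_cong[OF G, of "\<lambda>H. fps_nth H m"]
        by (simp_all only: fps_add_nth fps_zero_nth)
      then have "of_nat (Suc m) * of_nat (Suc (Suc m)) * fps_nth F n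
          = of_nat (Suc m) * of_nat (Suc (Suc m)) * fps_nth G n"
        unfolding leading lower by (metis add_right_cancel)
      then show ?thesis by (simp del: of_nat_Suc)
    qed
  qed
qed

lemma entire_eq_eval_fps:
  fixes f :: "complex \<Rightarrow> complex"
  assumes "f holomorphic_on UNIV" "f has_fps_expansion F"
  shows "f z = eval_fps F z"
proof -
  have "fps_expansion f 0 = F"
    using assms by (intro fps_expansion_unique_complex has_fps_expansion_fps_expansion) auto
  then show ?thesis
    using eval_fps_expansion'[of f 0 \<infinity> z] assms(1) by simp
qed

lemma entire_ode2_iff_fps:
  fixes u p q :: "complex \<Rightarrow> complex"
  assumes hol: "u holomorphic_on UNIV" "p holomorphic_on UNIV" "q holomorphic_on UNIV"
    and exp: "u has_fps_expansion F" "p has_fps_expansion P" "q has_fps_expansion Q"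
  shows "(\<forall>z. deriv (deriv u) z + p z * deriv u z + q z * u z = 0) \<longleftrightarrow>
         fps_deriv (fps_deriv F) + P * fps_deriv F + Q * F = 0"
proof -
  define g where "g z = deriv (deriv u) z + p z * deriv u z + q z * u z" for z
  have "g holomorphic_on UNIV"
    unfolding g_def using hol by (intro holomorphic_intros holomorphic_deriv) auto
  moreover have g: "g has_fps_expansion fps_deriv (fps_deriv F) + P * fps_deriv F + Q * F"
    unfolding g_def[abs_def] using exp by (intro fps_expansion_intros)
  ultimately have "g z = eval_fps (fps_deriv (fps_deriv F) + P * fps_deriv F + Q * F) z" for z
    by (rule entire_eq_eval_fps)
  moreover have "g = (\<lambda>_. 0) \<Longrightarrow> fps_deriv (fps_deriv F) + P * fps_deriv F + Q * F = 0"
    using g by (intro fps_expansion_unique_complex[of "\<lambda>_. 0"]) auto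
  ultimately show ?thesis
    unfolding g_def by auto
qed

lemma entire_ode2_unique:
  fixes u w p q :: "complex \<Rightarrow> complex"
  assumes hol: "u holomorphic_on UNIV" "w holomorphic_on UNIV"
      "p holomorphic_on UNIV" "q holomorphic_on UNIV"
    and u: "\<And>z. deriv (deriv u) z + p z * deriv u z + q z * u z = 0"
    and w: "\<And>z. deriv (deriv w) z + p z * deriv w z + q z * w z = 0"
    and init: "u 0 = w 0" "deriv u 0 = deriv w 0"
  shows "u = w"
proof -
  define P Q where "P = fps_expansion p 0" and "Q = fps_expansion q 0"
  have expansion: "f has_fps_expansion fps_expansion f 0" if "f holomorphic_on UNIV" for f
    using that by (intro has_fps_expansion_fps_expansion) auto
  have fps_ode: "fps_deriv (fps_deriv (fps_expansion f 0)) + P * fps_deriv (fps_expansion f 0)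
      + Q * fps_expansion f 0 = 0"
    if "f holomorphic_on UNIV" "\<And>z. deriv (deriv f) z + p z * deriv f z + q z * f z = 0" for f
    using entire_ode2_iff_fps[OF that(1) hol(3,4) expansion[OF that(1)] expansion expansion]
      hol that(2)
    unfolding P_def Q_def by blast
  have "fps_expansion u 0 = fps_expansion w 0"
  proof (rule fps_ode2_unique)
    show "fps_nth (fps_expansion u 0) 0 = fps_nth (fps_expansion w 0) 0"
      "fps_nth (fps_expansion u 0) 1 = fps_nth (fps_expansion w 0) 1"
      using init by (simp_all add: fps_expansion_def)
  qed (fact fps_ode[OF hol(1) u], fact fps_ode[OF hol(2) w])
  then show ?thesis
    using entire_eq_eval_fps[OF hol(1) expansion] entire_eq_eval_fps[OF hol(2) expansion] hol
    by auto
qed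

lemma the_entire_ode2_solution:
  fixes u p q :: "complex \<Rightarrow> complex"
  assumes hol: "u holomorphic_on UNIV" "p holomorphic_on UNIV" "q holomorphic_on UNIV"
    and u: "\<And>z. deriv (deriv u) z + p z * deriv u z + q z * u z = 0"
  shows "(THE w. w holomorphic_on UNIV \<and> w 0 = u 0 \<and> deriv w 0 = deriv u 0 \<and>
            (\<forall>z. deriv (deriv w) z + p z * deriv w z + q z * w z = 0)) = u"
  using assms entire_ode2_unique[OF _ hol(1-3) _ u] by (intro the_equality) auto

section \<open>The power series solution of v'' = a z^(k-1) v\<close>

lemma le_Max_initial_segment:
  fixes s :: "nat \<Rightarrow> 'a::linorder"
  assumes "\<And>n. n > N \<Longrightarrow> \<exists>j<n. s n \<le> s j"
  shows "s n \<le> Max (s ` {..N})"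
proof (induction n rule: less_induct)
  case (less n)
  show ?case
  proof (cases "n \<le> N")
    case True
    then show ?thesis by (intro Max_ge) auto
  next
    case False
    then obtain j where "j < n" "s n \<le> s j" using assms[of n] by auto
    with less.IH show ?thesis by fastforce
  qed
qed

fun v_coeff :: "real \<Rightarrow> nat \<Rightarrow> nat \<Rightarrow> real" where
  "v_coeff a k 0 = -1"
| "v_coeff a k (Suc 0) = 1"
| "v_coeff a k (Suc (Suc n)) =
     (if k \<le> Suc n then a * v_coeff a k (Suc n - k) / (real (n + 2) * real (n + 1)) else 0)"

lemma v_coeff_eq_0:
  assumes "2 \<le> n" "n \<le> k"
  shows "v_coeff a k n = 0"
proof -
  have n: "n = Suc (Suc (n - 2))" using assms(1) by arith
  show ?thesis using assms by (subst n) simp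
qed

lemma v_coeff_shift:
  assumes "k \<ge> 1"
  shows "v_coeff a k (n + k + 1) = a * v_coeff a k n / (real (n + k + 1) * real (n + k))"
proof -
  obtain j where k: "k = Suc j" using assms by (cases k) auto
  have "n + k + 1 = Suc (Suc (n + j))" "n + k = Suc (n + j)" by (simp_all add: k)
  then show ?thesis by (simp only: v_coeff.simps) (simp add: k)
qed

lemma abs_v_coeff_step:
  assumes "k \<le> Suc m" "r \<ge> 0"
  shows "\<bar>v_coeff a k (Suc (Suc m))\<bar> * r ^ Suc (Suc m)
    = \<bar>a\<bar> * r ^ (k + 1) / (real (m + 2) * real (m + 1))
        * (\<bar>v_coeff a k (Suc m - k)\<bar> * r ^ (Suc m - k))"
proof -
  have "r ^ Suc (Suc m) = r ^ (k + 1) * r ^ (Suc m - k)"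
    using assms(1) by (simp flip: power_add)
  then show ?thesis
    using assms by (simp add: abs_mult abs_divide)
qed

lemma v_coeff_bounded:
  assumes "r \<ge> 0"
  shows "\<exists>C. \<forall>n. \<bar>v_coeff a k n\<bar> * r ^ n \<le> C"
proof -
  define s where "s n = \<bar>v_coeff a k n\<bar> * r ^ n" for n
  define N where "N = Suc (nat \<lceil>\<bar>a\<bar> * r ^ (k + 1)\<rceil>)"
  have "\<exists>j<n. s n \<le> s j" if "n > N" for n
  proof -
    define m where "m = n - 2"
    have n: "n = Suc (Suc m)"
      using that unfolding m_def N_def by simp
    show ?thesis
    proof (cases "k \<le> Suc m")
      case False
      then have "s n \<le> s 0" unfolding s_def n by simp
      then show ?thesis by (intro exI[of _ 0]) (simp add: n)
    next
      case True
      have "\<bar>a\<bar> * r ^ (k + 1) \<le> real N" unfolding N_def by linarith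
      also have "\<dots> \<le> real (m + 2) * real (m + 1)"
      proof -
        have "N \<le> (m + 2) * (m + 1)" using that unfolding n by (simp add: algebra_simps)
        then show ?thesis by (metis of_nat_mono of_nat_mult)
      qed
      finally have "\<bar>a\<bar> * r ^ (k + 1) / (real (m + 2) * real (m + 1)) \<le> 1"
        by simp
      then have "s n \<le> s (Suc m - k)"
        unfolding s_def n abs_v_coeff_step[OF True assms]
        using assms by (intro mult_left_le_one_le) simp_all
      then show ?thesis by (intro exI[of _ "Suc m - k"]) (simp add: n)
    qed
  qed
  then have "s n \<le> Max (s ` {..N})" for n by (rule le_Max_initial_segment)
  then show ?thesis unfolding s_def by blast
qed

lemma summable_v_coeff:
  assumes "r \<ge> 0"
  shows "summable (\<lambda>n. \<bar>v_coeff a k n\<bar> * r ^ n)"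
proof -
  obtain C where C: "\<And>n. \<bar>v_coeff a k n\<bar> * (2 * r) ^ n \<le> C"
    using v_coeff_bounded[of "2 * r" a k] assms by auto
  have "norm (\<bar>v_coeff a k n\<bar> * r ^ n) = \<bar>v_coeff a k n\<bar> * (2 * r) ^ n * (1 / 2) ^ n" for n
    using assms by (simp add: power_mult_distrib power_divide)
  also have "\<dots> n \<le> C * (1 / 2) ^ n" for n
    by (rule mult_right_mono[OF C]) simp
  finally have bound: "norm (\<bar>v_coeff a k n\<bar> * r ^ n) \<le> C * (1 / 2) ^ n" for n .
  show ?thesis
  proof (rule summable_comparison_test')
    show "summable (\<lambda>n. C * (1 / 2 :: real) ^ n)"
      by (intro summable_mult summable_geometric) simp
  qed (rule bound)
qed

definition v_fps :: "real \<Rightarrow> nat \<Rightarrow> complex fps" where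
  "v_fps a k = Abs_fps (\<lambda>n. of_real (v_coeff a k n))"

lemma fps_conv_radius_v_fps [simp]: "fps_conv_radius (v_fps a k) = \<infinity>"
  unfolding fps_conv_radius_def v_fps_def fps_nth_Abs_fps
proof (rule conv_radius_inftyI'')
  fix z :: complex
  show "summable (\<lambda>n. of_real (v_coeff a k n) * z ^ n)"
    by (rule summable_norm_cancel)
      (use summable_v_coeff[OF norm_ge_zero, of a k z] in \<open>simp add: norm_mult norm_power\<close>)
qed

lemma fps_deriv_deriv_v_fps:
  assumes "k \<ge> 1"
  shows "fps_deriv (fps_deriv (v_fps a k)) = fps_const (of_real a) * fps_X ^ (k - 1) * v_fps a k"
proof (rule fps_ext)
  fix n
  have "fps_nth (fps_deriv (fps_deriv (v_fps a k))) n
      = of_real (real (n + 1) * real (n + 2) * v_coeff a k (Suc (Suc n)))"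
    by (simp add: v_fps_def algebra_simps)
  also have "real (n + 1) * real (n + 2) * v_coeff a k (Suc (Suc n))
      = (if k - 1 \<le> n then a * v_coeff a k (n - (k - 1)) else 0)"
    using assms by (auto simp: Suc_diff_le)
  also have "\<dots> = fps_nth (fps_const (of_real a) * fps_X ^ (k - 1) * v_fps a k) n"
    by (simp add: v_fps_def mult.assoc fps_X_power_mult_nth)
  finally show "fps_nth (fps_deriv (fps_deriv (v_fps a k))) n =
      fps_nth (fps_const (of_real a) * fps_X ^ (k - 1) * v_fps a k) n" .
qed

lemma eval_v_fps_of_real: "eval_fps (v_fps a k) (of_real x) = of_real (\<Sum>n. v_coeff a k n * x ^ n)"
proof -
  have "summable (\<lambda>n. v_coeff a k n * x ^ n)"
    by (rule summable_norm_cancel)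
      (use summable_v_coeff[OF abs_ge_zero, of a k x] in \<open>simp add: abs_mult power_abs\<close>)
  then have "(\<lambda>n. of_real (v_coeff a k n * x ^ n) :: complex)
      sums of_real (\<Sum>n. v_coeff a k n * x ^ n)"
    by (subst sums_of_real_iff) (rule summable_sums)
  then show ?thesis
    unfolding eval_fps_def v_fps_def by (simp add: sums_iff)
qed

lemma u_sol_eq_exp_mult:
  assumes "nodes t \<ge> 1"
  defines "a \<equiv> wt t * real (nodes t)"
  shows "u_sol t = (\<lambda>z. exp z * eval_fps (v_fps a (nodes t)) z)"
proof -
  define k where "k = nodes t"
  define V where "V = v_fps a k"
  define U where "U = fps_exp 1 * V"
  define u where "u z = exp z * eval_fps V z" for z
  define q where "q z = 1 - of_real a * z ^ (k - 1)" for z :: complex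
  have hol: "u holomorphic_on UNIV" "q holomorphic_on UNIV"
    unfolding u_def q_def V_def by (auto intro!: holomorphic_intros)
  have U: "u has_fps_expansion U"
    unfolding u_def[abs_def] U_def V_def
    by (intro fps_expansion_intros eval_fps_has_fps_expansion) simp
  have P: "(\<lambda>_. -2) has_fps_expansion (-2 :: complex fps)"
    by (intro fps_expansion_intros)
  have Q: "q has_fps_expansion 1 - fps_const (of_real a) * fps_X ^ (k - 1)"
    unfolding q_def[abs_def] by (intro fps_expansion_intros)
  have "fps_deriv (fps_deriv U) + (-2) * fps_deriv U
      + (1 - fps_const (of_real a) * fps_X ^ (k - 1)) * U = 0"
    using fps_deriv_deriv_v_fps[of k a] assms(1)
    unfolding U_def V_def k_def by (simp add: algebra_simps)
  then have ode: "deriv (deriv u) z + (-2) * deriv u z + q z * u z = 0" for z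
    using entire_ode2_iff_fps[OF hol(1) holomorphic_on_const hol(2) U P Q] by simp
  have "u 0 = -1"
    by (simp add: u_def V_def v_fps_def eval_fps_at_0)
  moreover have "deriv u 0 = fps_nth U 1"
    using fps_nth_fps_expansion[OF U, of 1] by simp
  moreover have "fps_nth U 1 = 0"
    by (simp add: U_def V_def v_fps_def fps_mult_nth)
  ultimately have "u_sol t = (THE w. w holomorphic_on UNIV \<and> w 0 = u 0 \<and> deriv w 0 = deriv u 0 \<and>
            (\<forall>z. deriv (deriv w) z + (-2) * deriv w z + q z * w z = 0))"
    unfolding u_sol_def q_def k_def a_def by simp
  also have "\<dots> = u"
    using hol ode by (intro the_entire_ode2_solution) auto
  finally show ?thesis unfolding u_def[abs_def] V_def k_def .
qed

lemma suminf_le_shift_contraction: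
  fixes s :: "nat \<Rightarrow> real"
  assumes s: "summable s" and shift: "\<And>n. s (n + m) \<le> c * s n" and "c < 1"
  shows "suminf s \<le> (\<Sum>i<m. s i) / (1 - c)"
proof -
  have "suminf s = (\<Sum>n. s (n + m)) + (\<Sum>i<m. s i)"
    by (rule suminf_split_initial_segment[OF s])
  also have "(\<Sum>n. s (n + m)) \<le> (\<Sum>n. c * s n)"
    using s by (intro suminf_le shift summable_mult summable_ignore_initial_segment)
  also have "(\<Sum>n. c * s n) = c * suminf s"
    by (rule suminf_mult[OF s])
  finally show ?thesis
    using \<open>c < 1\<close> by (simp add: pos_le_divide_eq algebra_simps)
qed

lemma sum_v_coeff_initial:
  assumes "k \<ge> 1"
  shows "(\<Sum>i<k + 1. \<bar>v_coeff a k i\<bar> * R ^ i) = 1 + R"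
proof -
  have split: "{..<k + 1} = {..<2} \<union> {2..<k + 1}"
    using assms by auto
  have "(\<Sum>i<k + 1. \<bar>v_coeff a k i\<bar> * R ^ i)
      = (\<Sum>i<2. \<bar>v_coeff a k i\<bar> * R ^ i) + (\<Sum>i=2..<k + 1. \<bar>v_coeff a k i\<bar> * R ^ i)"
    unfolding split by (rule sum.union_disjoint) auto
  also have "(\<Sum>i=2..<k + 1. \<bar>v_coeff a k i\<bar> * R ^ i) = 0"
    by (intro sum.neutral) (simp add: v_coeff_eq_0)
  finally show ?thesis
    by (simp add: numeral_2_eq_2)
qed

lemma v_coeff_tail_le:
  assumes k: "k \<ge> 1" and "a \<ge> 0" "R \<ge> 0"
    and ratio: "a * R ^ (k + 1) / (real (k + 1) * real k) \<le> c" and "c < 1"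
  shows "(\<Sum>n. \<bar>v_coeff a k (n + 2)\<bar> * R ^ (n + 2)) \<le> (1 + R) * c / (1 - c)"
proof -
  define s where "s n = \<bar>v_coeff a k n\<bar> * R ^ n" for n
  have s: "summable s"
    unfolding s_def using \<open>R \<ge> 0\<close> by (rule summable_v_coeff)
  have "s (n + (k + 1)) \<le> c * s n" for n
  proof -
    have "s (n + (k + 1)) = a * R ^ (k + 1) / (real (n + k + 1) * real (n + k)) * s n"
      using v_coeff_shift[OF k, of a n] \<open>a \<ge> 0\<close> \<open>R \<ge> 0\<close> unfolding s_def
      by (simp add: abs_mult power_add algebra_simps)
    also have "\<dots> \<le> a * R ^ (k + 1) / (real (k + 1) * real k) * s n"
      using k \<open>a \<ge> 0\<close> \<open>R \<ge> 0\<close>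
      by (intro mult_right_mono divide_left_mono mult_mono) (auto simp: s_def)
    also have "\<dots> \<le> c * s n"
      using ratio \<open>R \<ge> 0\<close> by (intro mult_right_mono) (simp_all add: s_def)
    finally show ?thesis .
  qed
  moreover have "(\<Sum>i<k + 1. s i) = 1 + R"
    unfolding s_def by (rule sum_v_coeff_initial[OF k])
  ultimately have "suminf s \<le> (1 + R) / (1 - c)"
    using suminf_le_shift_contraction[OF s _ \<open>c < 1\<close>, of "k + 1"] by simp
  moreover have "s 0 = 1" "s 1 = R"
    by (simp_all add: s_def)
  then have "suminf s = (\<Sum>n. s (n + 2)) + (1 + R)"
    using suminf_split_initial_segment[OF s, of 2] by (simp add: numeral_2_eq_2)
  ultimately have "(\<Sum>n. s (n + 2)) \<le> (1 + R) / (1 - c) - (1 + R)"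
    by linarith
  also have "\<dots> = (1 + R) * c / (1 - c)"
    using \<open>c < 1\<close> by (simp add: field_simps)
  finally show ?thesis
    unfolding s_def .
qed

lemma norm_eval_v_fps_sub_le:
  assumes "norm z \<le> R"
  shows "norm (eval_fps (v_fps a k) z - (z - 1)) \<le> (\<Sum>n. \<bar>v_coeff a k (n + 2)\<bar> * R ^ (n + 2))"
proof -
  define f where "f n = fps_nth (v_fps a k) n * z ^ n" for n
  have R: "R \<ge> 0" using assms norm_ge_zero order.trans by blast
  have "f sums eval_fps (v_fps a k) z"
    unfolding f_def by (intro sums_eval_fps) simp
  then have "(\<lambda>n. f (n + 2)) sums (eval_fps (v_fps a k) z - (z - 1))"
    by (subst sums_iff_shift) (simp add: f_def v_fps_def numeral_2_eq_2)
  then have "norm (eval_fps (v_fps a k) z - (z - 1)) = norm (\<Sum>n. f (n + 2))"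
    by (simp add: sums_iff)
  also have "\<dots> \<le> (\<Sum>n. \<bar>v_coeff a k (n + 2)\<bar> * R ^ (n + 2))"
  proof (rule norm_suminf_le)
    have "norm (f n) \<le> \<bar>v_coeff a k n\<bar> * R ^ n" for n
      unfolding f_def v_fps_def using assms
      by (simp add: norm_mult norm_power mult_left_mono power_mono)
    then show "norm (f (n + 2)) \<le> \<bar>v_coeff a k (n + 2)\<bar> * R ^ (n + 2)" for n .
    show "summable (\<lambda>n. \<bar>v_coeff a k (n + 2)\<bar> * R ^ (n + 2))"
      using summable_v_coeff[OF R] by (rule summable_ignore_initial_segment)
  qed
  finally show ?thesis .
qed

section \<open>Zeros of small perturbations of z - 1\<close>

lemma real_zero_near_one:
  fixes g :: "real \<Rightarrow> real"
  assumes "continuous_on {1 - \<epsilon>..1 + \<epsilon>} g"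
    and near: "\<And>x. x \<in> {1 - \<epsilon>..1 + \<epsilon>} \<Longrightarrow> \<bar>g x - (x - 1)\<bar> \<le> \<epsilon>" and "0 \<le> \<epsilon>"
  shows "\<exists>x \<in> {1 - \<epsilon>..1 + \<epsilon>}. g x = 0"
proof -
  have "g (1 - \<epsilon>) \<le> 0" "0 \<le> g (1 + \<epsilon>)"
    using near[of "1 - \<epsilon>"] near[of "1 + \<epsilon>"] \<open>0 \<le> \<epsilon>\<close> by (auto simp: abs_le_iff)
  then show ?thesis
    using IVT'[of g "1 - \<epsilon>" 0 "1 + \<epsilon>"] assms(1,3) by auto
qed

text \<open>All zeros lie in cball 1 \<epsilon>, and Cauchy's estimate on discs of radius (R - 1) / 2 around
  its points bounds the derivative of f z - (z - 1) there by \<epsilon> / ((R - 1) / 2) < 1.\<close>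
lemma unique_zero_near_one:
  fixes f :: "complex \<Rightarrow> complex"
  assumes hol: "f holomorphic_on ball 0 R"
    and near: "\<And>z. norm z \<le> R \<Longrightarrow> norm (f z - (z - 1)) \<le> \<epsilon>"
    and small: "2 * \<epsilon> < R - 1"
    and zeros: "norm z1 \<le> R" "f z1 = 0" "norm z2 \<le> R" "f z2 = 0"
  shows "z1 = z2"
proof (rule ccontr)
  assume "z1 \<noteq> z2"
  define E where "E z = f z - (z - 1)" for z
  define r where "r = (R - 1) / 2"
  have "0 \<le> \<epsilon>"
    using near[OF zeros(1)] norm_ge_zero order_trans by blast
  then have "\<epsilon> < r" "0 < r"
    using small unfolding r_def by auto
  have holE: "E holomorphic_on ball 0 R"
    unfolding E_def using hol by (intro holomorphic_intros)
  have zero_near_one: "z \<in> cball 1 \<epsilon>" if "norm z \<le> R" "f z = 0" for z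
    using near[OF that(1)] that(2) by (simp add: dist_norm norm_minus_commute)
  have disc: "cball \<xi> r \<subseteq> ball 0 R" if "\<xi> \<in> cball 1 \<epsilon>" for \<xi> :: complex
  proof
    fix x assume "x \<in> cball \<xi> r"
    then have "norm (x - \<xi>) \<le> r" "norm (\<xi> - 1) \<le> \<epsilon>"
      using that by (auto simp: dist_norm norm_minus_commute)
    then have "norm x \<le> 1 + \<epsilon> + r"
      using norm_triangle_sub[of \<xi> 1] norm_triangle_sub[of x \<xi>] by simp
    then show "x \<in> ball 0 R"
      using \<open>\<epsilon> < r\<close> unfolding r_def by (simp add: field_simps)
  qed
  have deriv_bound: "norm (deriv E \<xi>) \<le> \<epsilon> / r" if "\<xi> \<in> cball 1 \<epsilon>" for \<xi>
  proof -
    have "norm ((deriv ^^ 1) E \<xi>) \<le> fact 1 * \<epsilon> / r ^ 1"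
    proof (rule Cauchy_inequality)
      show "E holomorphic_on ball \<xi> r"
        using holE disc[OF that] ball_subset_cball holomorphic_on_subset by blast
      show "continuous_on (cball \<xi> r) E"
        using holE disc[OF that] holomorphic_on_imp_continuous_on continuous_on_subset by blast
      show "norm (E x) \<le> \<epsilon>" if "norm (\<xi> - x) = r" for x
        using disc[OF \<open>\<xi> \<in> cball 1 \<epsilon>\<close>] that near[of x] unfolding E_def by (auto simp: dist_norm)
    qed (rule \<open>0 < r\<close>)
    then show ?thesis by simp
  qed
  have "norm (E z1 - E z2) \<le> \<epsilon> / r * norm (z1 - z2)"
  proof (rule field_differentiable_bound[OF convex_cball])
    show "(E has_field_derivative deriv E x) (at x within cball 1 \<epsilon>)" if "x \<in> cball 1 \<epsilon>" for x
      using holE disc[OF that] \<open>0 < r\<close> by (intro holomorphic_derivI) auto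
  qed (use deriv_bound zero_near_one zeros in auto)
  also have "\<dots> < 1 * norm (z1 - z2)"
    using \<open>\<epsilon> < r\<close> \<open>0 < r\<close> \<open>z1 \<noteq> z2\<close> by (intro mult_strict_right_mono) auto
  finally show False
    using zeros unfolding E_def by (simp add: norm_minus_commute)
qed

section \<open>Increasing labelings\<close>

lemma positions_snocD: "p @ [b] \<in> positions t \<Longrightarrow> p \<in> positions t"
proof (induction t arbitrary: p)
  case Leaf then show ?case by simp
next
  case (Node l r)
  show ?case
  proof (cases p)
    case Nil then show ?thesis by simp
  next
    case (Cons x q)
    then show ?thesis using Node by (cases x) auto
  qed
qed

lemma finite_positions: "finite (positions t)"
  by (induction t) auto

lemma Nil_in_positions: "nodes t \<ge> 1 \<Longrightarrow> [] \<in> positions t"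
  by (cases t) auto

lemma incr_labelingsD:
  assumes "f \<in> incr_labelings t"
  shows "bij_betw f (positions t) {1..nodes t}" "\<And>p. p \<notin> positions t \<Longrightarrow> f p = 0"
    "\<And>p b. p @ [b] \<in> positions t \<Longrightarrow> f p < f (p @ [b])"
  using assms unfolding incr_labelings_def by auto

lemma incr_labeling_root_le:
  assumes f: "f \<in> incr_labelings t" and p: "p \<in> positions t"
  shows "f [] \<le> f p"
  using p
proof (induction p rule: rev_induct)
  case Nil then show ?case by simp
next
  case (snoc b q)
  have "q \<in> positions t" using snoc.prems by (rule positions_snocD)
  then have "f [] \<le> f q" by (rule snoc.IH)
  also have "f q < f (q @ [b])" using incr_labelingsD(3)[OF f snoc.prems] .
  finally show ?case by simp
qed

lemma incr_labeling_root:
  assumes f: "f \<in> incr_labelings t" and k: "nodes t \<ge> 1"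
  shows "f [] = 1"
proof -
  have bij: "bij_betw f (positions t) {1..nodes t}" by (rule incr_labelingsD(1)[OF f])
  have r: "[] \<in> positions t" using k by (rule Nil_in_positions)
  have "1 \<in> f ` positions t" using bij k unfolding bij_betw_def by auto
  then obtain p where "p \<in> positions t" "f p = 1" by auto
  then have "f [] \<le> 1" using incr_labeling_root_le[OF f] by fastforce
  moreover have "f [] \<in> {1..nodes t}" using bij r unfolding bij_betw_def by auto
  ultimately show ?thesis by simp
qed

lemma incr_labeling_two_at_child:
  assumes f: "f \<in> incr_labelings t" and k: "nodes t \<ge> 2"
  shows "\<exists>b. f [b] = 2"
proof -
  have bij: "bij_betw f (positions t) {1..nodes t}" by (rule incr_labelingsD(1)[OF f])
  have r: "[] \<in> positions t" using k by (intro Nil_in_positions) simp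
  have f1: "f [] = 1" using incr_labeling_root[OF f] k by simp
  have "2 \<in> f ` positions t" using bij k unfolding bij_betw_def by auto
  then obtain p where p: "p \<in> positions t" "f p = 2" by auto
  have "p \<noteq> []" using p f1 by auto
  then obtain q b where qb: "p = q @ [b]" by (metis rev_exhaust)
  have q: "q \<in> positions t" using p qb positions_snocD by blast
  have "f q < 2" using incr_labelingsD(3)[OF f, of q b] p qb by simp
  moreover have "f q \<ge> 1" using incr_labeling_root_le[OF f q] f1 by simp
  ultimately have "f q = f []" using f1 by simp
  then have "q = []" using bij q r unfolding bij_betw_def inj_on_def by blast
  then show ?thesis using p qb by auto
qed

lemma incr_labelings_eqI:
  assumes f: "f \<in> incr_labelings t" and g: "g \<in> incr_labelings t"
    and eq: "\<And>p. p \<in> positions t \<Longrightarrow> f p = g p"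
  shows "f = g"
proof
  fix p show "f p = g p"
    using eq incr_labelingsD(2)[OF f] incr_labelingsD(2)[OF g] by (cases "p \<in> positions t") auto
qed

lemma map_incr_labeling_in_permutations:
  assumes f: "f \<in> incr_labelings t" and k: "nodes t \<ge> 2" and f2: "f [b] = 2"
    and xs: "set xs = positions t - {[], [b]}" "distinct xs"
  shows "map f xs \<in> permutations_of_set {3..nodes t}"
proof -
  have bij: "bij_betw f (positions t) {1..nodes t}" by (rule incr_labelingsD(1)[OF f])
  then have inj: "inj_on f (positions t)" by (rule bij_betw_imp_inj_on)
  have "[] \<in> positions t" "[b] \<in> positions t"
    using k Nil_in_positions incr_labelingsD(2)[OF f, of "[b]"] f2 by auto
  then have "f ` set xs = f ` positions t - f ` {[], [b]}"
    unfolding xs(1) by (intro inj_on_image_set_diff[OF inj]) auto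
  also have "\<dots> = {1..nodes t} - {1, 2}"
    using bij incr_labeling_root[OF f] k f2 unfolding bij_betw_def by auto
  also have "\<dots> = {3..nodes t}" by auto
  finally show ?thesis
    using xs inj by (auto simp: permutations_of_set_def distinct_map intro: inj_on_subset)
qed

lemma card_incr_labelings_child_two:
  assumes k: "nodes t \<ge> 2"
  shows "finite {f \<in> incr_labelings t. f [b] = 2}"
    and "card {f \<in> incr_labelings t. f [b] = 2} \<le> fact (nodes t - 2)"
proof -
  define L where "L = {f \<in> incr_labelings t. f [b] = 2}"
  obtain xs where xs: "set xs = positions t - {[], [b]}" "distinct xs"
    using finite_distinct_list finite_positions by (metis finite_Diff)
  have inj: "inj_on (\<lambda>f. map f xs) L"
  proof (rule inj_onI)
    fix f g assume L: "f \<in> L" "g \<in> L" and "map f xs = map g xs"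
    then have rest: "f p = g p" if "p \<in> positions t - {[], [b]}" for p
      using xs(1) that by (simp add: map_eq_conv)
    have "f [] = g []" "f [b] = g [b]"
      using L incr_labeling_root[of f t] incr_labeling_root[of g t] k unfolding L_def by auto
    then have "f p = g p" if "p \<in> positions t" for p
      using rest[of p] that by (cases "p = [] \<or> p = [b]") auto
    then show "f = g"
      using L unfolding L_def by (intro incr_labelings_eqI[of f t g]) auto
  qed
  have img: "(\<lambda>f. map f xs) ` L \<subseteq> permutations_of_set {3..nodes t}"
    using map_incr_labeling_in_permutations[OF _ k _ xs] unfolding L_def by blast
  have "finite L"
    using inj_on_finite[OF inj img] by simp
  moreover have "card L \<le> card (permutations_of_set {3..nodes t})"
    by (rule card_inj_on_le[OF inj img]) simp
  ultimately show "finite {f \<in> incr_labelings t. f [b] = 2}"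
    and "card {f \<in> incr_labelings t. f [b] = 2} \<le> fact (nodes t - 2)"
    unfolding L_def by simp_all
qed

lemma ell_le_two_fact:
  assumes k: "nodes t \<ge> 2"
  shows "ell t \<le> 2 * fact (nodes t - 2)"
proof -
  define L where "L b = {f \<in> incr_labelings t. f [b] = 2}" for b
  have "incr_labelings t \<subseteq> L False \<union> L True"
  proof
    fix f assume f: "f \<in> incr_labelings t"
    then obtain b where "f [b] = 2"
      using incr_labeling_two_at_child[OF _ k] by blast
    then show "f \<in> L False \<union> L True"
      using f unfolding L_def by (cases b) auto
  qed
  then have "ell t \<le> card (L False \<union> L True)"
    unfolding ell_def using card_incr_labelings_child_two(1)[OF k] unfolding L_def
    by (intro card_mono) auto
  also have "\<dots> \<le> card (L False) + card (L True)"
    by (rule card_Un_le)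
  also have "\<dots> \<le> fact (nodes t - 2) + fact (nodes t - 2)"
    using card_incr_labelings_child_two(2)[OF k] unfolding L_def by (intro add_mono)
  finally show ?thesis
    by simp
qed

lemma wt_le:
  assumes "nodes t \<ge> 2"
  shows "wt t \<le> 2 / (real (nodes t) * (real (nodes t) - 1))"
proof -
  obtain m where m: "nodes t = Suc (Suc m)"
    using assms by (metis add_2_eq_Suc le_Suc_ex)
  have fact: "(fact (nodes t) :: real) = real (nodes t) * (real (nodes t) - 1) * fact m"
    unfolding m by (simp add: algebra_simps)
  have "ell t \<le> 2 * fact m"
    using ell_le_two_fact[OF assms] m by simp
  then have "real (ell t) \<le> 2 * fact m"
    by (metis of_nat_fact of_nat_le_iff of_nat_mult of_nat_numeral)
  then have "wt t \<le> 2 * fact m / (real (nodes t) * (real (nodes t) - 1) * fact m)"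
    unfolding wt_def fact using assms by (intro divide_right_mono) auto
  also have "\<dots> = 2 / (real (nodes t) * (real (nodes t) - 1))"
    by simp
  finally show ?thesis .
qed

section \<open>The zero-free annulus\<close>

lemma norm_eval_v_fps_tree_sub_le:
  assumes k: "nodes t \<ge> 2" and "norm z \<le> R"
  defines "c \<equiv> 2 / (real (nodes t) - 1) * R ^ (nodes t + 1)
                  / (real (nodes t + 1) * real (nodes t))"
  assumes "c < 1"
  shows "norm (eval_fps (v_fps (wt t * real (nodes t)) (nodes t)) z - (z - 1))
           \<le> (1 + R) * c / (1 - c)"
proof -
  define a where "a = wt t * real (nodes t)"
  have "R \<ge> 0"
    using \<open>norm z \<le> R\<close> norm_ge_zero order_trans by blast
  have "0 \<le> a" unfolding a_def wt_def by simp
  have "a \<le> 2 / (real (nodes t) * (real (nodes t) - 1)) * real (nodes t)"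
    unfolding a_def using wt_le[OF k] by (intro mult_right_mono) auto
  also have "\<dots> = 2 / (real (nodes t) - 1)"
    using k by simp
  finally have "a * R ^ (nodes t + 1) / (real (nodes t + 1) * real (nodes t)) \<le> c"
    unfolding c_def using \<open>R \<ge> 0\<close> by (intro divide_right_mono mult_right_mono) auto
  then have "(\<Sum>n. \<bar>v_coeff a (nodes t) (n + 2)\<bar> * R ^ (n + 2)) \<le> (1 + R) * c / (1 - c)"
    using k \<open>0 \<le> a\<close> \<open>R \<ge> 0\<close> \<open>c < 1\<close> by (intro v_coeff_tail_le) auto
  then show ?thesis
    using norm_eval_v_fps_sub_le[OF \<open>norm z \<le> R\<close>] unfolding a_def
    by (rule order_trans[rotated])
qed

lemma eval_v_fps_unique_zero:
  assumes near: "\<And>z. norm z \<le> R \<Longrightarrow> norm (eval_fps (v_fps a k) z - (z - 1)) \<le> \<epsilon>"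
    and small: "0 \<le> \<epsilon>" "\<epsilon> < 1" "2 * \<epsilon> < R - 1"
  obtains x0 where "0 < x0" "x0 < R" "eval_fps (v_fps a k) (of_real x0) = 0"
    "\<And>w. norm w \<le> R \<Longrightarrow> eval_fps (v_fps a k) w = 0 \<Longrightarrow> w = of_real x0"
proof -
  define v where "v = eval_fps (v_fps a k)"
  define g where "g x = Re (v (of_real x))" for x
  have hol: "v holomorphic_on UNIV"
    unfolding v_def by (intro holomorphic_intros) simp
  have v_real: "v (of_real x) = of_real (g x)" for x
    unfolding g_def v_def eval_v_fps_of_real by simp
  have "continuous_on UNIV v"
    using hol by (rule holomorphic_on_imp_continuous_on)
  then have "continuous_on {1 - \<epsilon>..1 + \<epsilon>} g"
    unfolding g_def by (auto intro!: continuous_intros continuous_on_compose2[of UNIV v])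
  moreover have "\<bar>g x - (x - 1)\<bar> \<le> \<epsilon>" if "x \<in> {1 - \<epsilon>..1 + \<epsilon>}" for x
  proof -
    have "v (of_real x) - (of_real x - 1) = of_real (g x - (x - 1))"
      using v_real by simp
    moreover have "norm (v (of_real x) - (of_real x - 1)) \<le> \<epsilon>"
      using near[of "of_real x"] that small unfolding v_def by simp
    ultimately show ?thesis
      by (metis norm_of_real)
  qed
  ultimately obtain x0 where x0: "x0 \<in> {1 - \<epsilon>..1 + \<epsilon>}" "g x0 = 0"
    using real_zero_near_one \<open>0 \<le> \<epsilon>\<close> by blast
  then have "0 < x0" "x0 < R" "v (of_real x0) = 0"
    using small v_real by auto
  moreover have "w = of_real x0" if "norm w \<le> R" "v w = 0" for w
    using unique_zero_near_one[of v R \<epsilon> w "of_real x0"] hol near small that \<open>x0 < R\<close>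
      \<open>0 < x0\<close> \<open>v (of_real x0) = 0\<close>
    unfolding v_def by (auto intro: holomorphic_on_subset)
  ultimately show ?thesis
    using that unfolding v_def by blast
qed

lemma u_sol_nonzero_beyond_rho_tilde:
  assumes k: "nodes t \<ge> 1"
    and near: "\<And>z. norm z \<le> R \<Longrightarrow>
      norm (eval_fps (v_fps (wt t * real (nodes t)) (nodes t)) z - (z - 1)) \<le> \<epsilon>"
    and small: "\<epsilon> < 1" "2 * \<epsilon> < R - 1"
    and z: "rho_tilde t < norm z" "norm z \<le> R"
  shows "u_sol t z \<noteq> 0"
proof
  assume "u_sol t z = 0"
  have zero_iff: "u_sol t w = 0 \<longleftrightarrow> eval_fps (v_fps (wt t * real (nodes t)) (nodes t)) w = 0"
    for w
    using u_sol_eq_exp_mult[OF k] by simp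
  have "0 \<le> R"
    using z(2) norm_ge_zero order_trans by blast
  then have "0 \<le> \<epsilon>"
    using order_trans[OF norm_ge_zero near[of 0]] by simp
  then obtain x0 where x0: "0 < x0" "x0 < R" "u_sol t (of_real x0) = 0"
    and unique: "\<And>w. norm w \<le> R \<Longrightarrow> u_sol t w = 0 \<Longrightarrow> w = of_real x0"
    using eval_v_fps_unique_zero[OF near _ small] zero_iff by metis
  have "x0 \<le> rho_tilde t"
    unfolding rho_tilde_def
  proof (rule cInf_greatest)
    show "{x. 0 < x \<and> u_sol t (of_real x) = 0} \<noteq> {}"
      using x0 by auto
    show "x0 \<le> x" if "x \<in> {x. 0 < x \<and> u_sol t (of_real x) = 0}" for x
      using that unique[of "of_real x"] \<open>x0 < R\<close> by (cases "x \<le> R") auto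
  qed
  moreover have "norm z = x0"
    using unique[OF z(2) \<open>u_sol t z = 0\<close>] \<open>0 < x0\<close> by simp
  ultimately show False
    using z(1) by simp
qed

lemma S_fun_analytic_at:
  assumes "nodes t \<ge> 1" "u_sol t z \<noteq> 0"
  shows "S_fun t analytic_on {z}"
proof -
  have "u_sol t holomorphic_on UNIV"
    unfolding u_sol_eq_exp_mult[OF assms(1)] by (intro holomorphic_intros) simp
  then have "(\<lambda>w. - deriv (u_sol t) w / u_sol t w) analytic_on {z}"
    using assms(2)
    by (intro analytic_intros) (auto simp: analytic_on_holomorphic intro: holomorphic_deriv)
  then show ?thesis
    unfolding S_fun_def[abs_def] .
qed

text \<open>c k bounds the ratio a R^(k+1) / ((k+1) k) of the coefficient recursion, as a \<le> 2/(k-1),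
  and (1 + R k) c k / (1 - c k) is the resulting bound on |v(z) - (z-1)|.\<close>
lemma eventually_isolating_radius:
  fixes d :: real
  assumes "0 < d" "d < 2"
  defines "R k \<equiv> 1 + (2 - d) * ln (real k) / real k"
  defines "c k \<equiv> 2 / (real k - 1) * R k ^ (k + 1) / (real (k + 1) * real k)"
  shows "eventually (\<lambda>k. c k < 1 \<and> (1 + R k) * c k / (1 - c k) < 1 \<and>
            2 * ((1 + R k) * c k / (1 - c k)) < R k - 1) sequentially"
  using assms unfolding R_def c_def by (intro eventually_conj) real_asymp+

lemma u_sol_zero_free_annulus:
  fixes d :: real
  assumes "0 < d" "d < 2"
  obtains K where "1 \<le> K"
    and "\<And>t z. K \<le> nodes t \<Longrightarrow> rho_tilde t < norm z \<Longrightarrow>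
           norm z \<le> 1 + (2 - d) * ln (real (nodes t)) / real (nodes t) \<Longrightarrow> u_sol t z \<noteq> 0"
proof -
  define R where "R k = 1 + (2 - d) * ln (real k) / real k" for k :: nat
  define c where "c k = 2 / (real k - 1) * R k ^ (k + 1) / (real (k + 1) * real k)" for k
  define \<epsilon> where "\<epsilon> k = (1 + R k) * c k / (1 - c k)" for k
  have "eventually (\<lambda>k. c k < 1 \<and> \<epsilon> k < 1 \<and> 2 * \<epsilon> k < R k - 1) sequentially"
    using assms unfolding R_def c_def \<epsilon>_def by (rule eventually_isolating_radius)
  then have "eventually (\<lambda>k. 2 \<le> k \<and> c k < 1 \<and> \<epsilon> k < 1 \<and> 2 * \<epsilon> k < R k - 1) sequentially"
    by (rule eventually_conj[OF eventually_ge_at_top])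
  then obtain K where K: "\<And>k. K \<le> k \<Longrightarrow> 2 \<le> k \<and> c k < 1 \<and> \<epsilon> k < 1 \<and> 2 * \<epsilon> k < R k - 1"
    unfolding eventually_sequentially by blast
  show ?thesis
  proof (rule that)
    show "1 \<le> K"
      using K[of K] by simp
    fix t and z :: complex
    assume "K \<le> nodes t" "rho_tilde t < norm z"
      and "norm z \<le> 1 + (2 - d) * ln (real (nodes t)) / real (nodes t)"
    then have "norm z \<le> R (nodes t)"
      unfolding R_def by simp
    show "u_sol t z \<noteq> 0"
    proof (rule u_sol_nonzero_beyond_rho_tilde)
      show "norm (eval_fps (v_fps (wt t * real (nodes t)) (nodes t)) w - (w - 1)) \<le> \<epsilon> (nodes t)"
        if "norm w \<le> R (nodes t)" for w
        using norm_eval_v_fps_tree_sub_le[of t w "R (nodes t)"] K[OF \<open>K \<le> nodes t\<close>] that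
        unfolding \<epsilon>_def c_def by blast
    qed (use K[OF \<open>K \<le> nodes t\<close>] \<open>rho_tilde t < norm z\<close> \<open>norm z \<le> R (nodes t)\<close> in auto)
  qed
qed

theorem lemma3p4:
  fixes \<delta> :: real
  assumes "\<delta> > 0"
  shows "\<exists>K. \<forall>t. nodes t \<ge> K \<longrightarrow>
           (\<forall>z. rho_tilde t < norm z \<and>
                 norm z < 1 + (2 - \<delta>) * ln (real (nodes t)) / real (nodes t)
                 \<longrightarrow> S_fun t analytic_on {z})"
proof -
  define d where "d = min \<delta> 1"
  have "0 < d" "d < 2"
    using assms unfolding d_def by auto
  then obtain K where "1 \<le> K" and zero_free: "\<And>t z. K \<le> nodes t \<Longrightarrow> rho_tilde t < norm z \<Longrightarrow>
      norm z \<le> 1 + (2 - d) * ln (real (nodes t)) / real (nodes t) \<Longrightarrow> u_sol t z \<noteq> 0"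
    by (rule u_sol_zero_free_annulus) blast
  show ?thesis
  proof (intro exI allI impI)
    fix t and z :: complex
    assume "K \<le> nodes t"
      and "rho_tilde t < norm z \<and> norm z < 1 + (2 - \<delta>) * ln (real (nodes t)) / real (nodes t)"
    moreover have "(2 - \<delta>) * ln (real (nodes t)) / real (nodes t)
        \<le> (2 - d) * ln (real (nodes t)) / real (nodes t)"
      using \<open>1 \<le> K\<close> \<open>K \<le> nodes t\<close> unfolding d_def by (intro divide_right_mono mult_right_mono) auto
    ultimately have "u_sol t z \<noteq> 0"
      by (intro zero_free) auto
    then show "S_fun t analytic_on {z}"
      using \<open>1 \<le> K\<close> \<open>K \<le> nodes t\<close> by (intro S_fun_analytic_at) auto
  qed
qed

end
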